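(* Let $X$ be a real Hilbert space and $I$ either $[0,T]$ ($T>0$) or $[0,+\infty)$. Assume: $K\subset X$ is a nonempty closed convex cone; $A:X\to X$ satisfies $(Au-Av,u-v)_X\ge m_A\|u-v\|_X^2$ and $\|Au-Av\|_X\le L_A\|u-v\|_X$ for all $u,v\in X$, with $m_A,L_A>0$; $f\in C(I;X)$; $B:X\to X$ is Lipschitz continuous; $u_0\in X$; $\mathcal{S}:C(I;X)\to C(I;X)$ is a history-dependent operator; $j:X\times K\to\mathbb{R}$ is such that $j(\eta,\cdot)$ is convex, positively homogeneous and Lipschitz continuous on $K$ for every $\eta\in X$, and there is $\alpha_j\ge0$ with $j(\eta_1,v_2)-j(\eta_1,v_1)+j(\eta_2,v_1)-j(\eta_2,v_2)\le\alpha_j\|\eta_1-\eta_2\|_X\|v_1-v_2\|_X$ for all $\eta_i\in X$, $v_i\in K$. Then there exists a unique function $u\in C^1(I;X)$ such that $$-\dot u(t)\in \mathrm{N}_{C(u(t),t)}\big(A\dot u(t)+Bu(t)+\mathcal{S}\dot u(t)\big)\quad\forall\,t\in I,\qquad u(0)=u_0.$$ Moreover, $\dot u\in C(I;K)$.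
   Context: $\mathcal{S}$ is history-dependent if for every compact $\mathcal J\subset I$ there is $L_{\mathcal J}>0$ with $\|\mathcal{S}u_1(t)-\mathcal{S}u_2(t)\|_X\le L_{\mathcal J}\int_0^t\|u_1(s)-u_2(s)\|_X ds$ for all $u_1,u_2\in C(I;X)$, $t\in\mathcal J$. Define $J(\eta,v)=j(\eta,v)$ for $v\in K$, $J(\eta,v)=+\infty$ for $v\notin K$; $C(\eta)=\{\xi\in X: J(\eta,v)\ge(\xi,v)_X\ \forall v\in X\}$; $C(\eta,t)=f(t)-C(\eta)$. For a nonempty closed convex $D\subset X$, $\mathrm{N}_D(x)=\{\xi:(\xi,w-x)_X\le0\ \forall w\in D\}$ if $x\in D$, $\emptyset$ otherwise. *)

theory Defs
  imports "HOL-Analysis.Analysis"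
begin

definition normal_cone :: "'a::real_inner set \<Rightarrow> 'a \<Rightarrow> 'a set" where
  "normal_cone D x = (if x \<in> D then {\<xi>. \<forall>w\<in>D. inner \<xi> (w - x) \<le> 0} else {})"

definition Jext :: "('a \<Rightarrow> 'a \<Rightarrow> real) \<Rightarrow> 'a set \<Rightarrow> 'a \<Rightarrow> 'a \<Rightarrow> ereal" where
  "Jext j K \<eta> v = (if v \<in> K then ereal (j \<eta> v) else \<infinity>)"

definition Cset :: "('a::real_inner \<Rightarrow> 'a \<Rightarrow> real) \<Rightarrow> 'a set \<Rightarrow> 'a \<Rightarrow> 'a set" where
  "Cset j K \<eta> = {\<xi>. \<forall>v. Jext j K \<eta> v \<ge> ereal (inner \<xi> v)}"

definition Cset_t :: "('a::real_inner \<Rightarrow> 'a \<Rightarrow> real) \<Rightarrow> 'a set \<Rightarrow> (real \<Rightarrow> 'a) \<Rightarrow> 'a \<Rightarrow> real \<Rightarrow> 'a set" where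
  "Cset_t j K f \<eta> t = (\<lambda>\<xi>. f t - \<xi>) ` Cset j K \<eta>"

definition history_dependent :: "real set \<Rightarrow> ((real \<Rightarrow> 'a::real_normed_vector) \<Rightarrow> (real \<Rightarrow> 'a)) \<Rightarrow> bool" where
  "history_dependent I S \<longleftrightarrow>
     (\<forall>J. compact J \<and> J \<subseteq> I \<longrightarrow>
        (\<exists>L>0. \<forall>u1 u2. continuous_on I u1 \<and> continuous_on I u2 \<longrightarrow>
           (\<forall>t\<in>J. norm (S u1 t - S u2 t) \<le> L * integral {0..t} (\<lambda>s. norm (u1 s - u2 s)))))"

definition is_solution ::
  "real set \<Rightarrow> ('a::real_inner \<Rightarrow> 'a) \<Rightarrow> ('a \<Rightarrow> 'a) \<Rightarrow> ((real \<Rightarrow> 'a) \<Rightarrow> (real \<Rightarrow> 'a))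
   \<Rightarrow> (real \<Rightarrow> 'a) \<Rightarrow> ('a \<Rightarrow> 'a \<Rightarrow> real) \<Rightarrow> 'a set \<Rightarrow> 'a \<Rightarrow> (real \<Rightarrow> 'a) \<Rightarrow> (real \<Rightarrow> 'a) \<Rightarrow> bool" where
  "is_solution I A B S f j K u0 u u' \<longleftrightarrow>
     (\<forall>t\<in>I. (u has_vector_derivative u' t) (at t within I)) \<and> continuous_on I u' \<and>
     (\<forall>t\<in>I. - u' t \<in> normal_cone (Cset_t j K f (u t) t) (A (u' t) + B (u t) + S u' t)) \<and>
     u 0 = u0"

end

theory Submission
  imports Defs
begin

(* Write w = u'. At each time t the inclusion says that -w(t) is normal to f(t) - C(u(t)) at
   A w(t) + B u(t) + (S w)(t); since j(eta, .) is the support function of C(eta) on the cone K,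
   this means that w(t) solves the stationary problem
   w in K, g - A w in C(eta), (g - A w, w) = j(eta, w)
   with eta = u(t) and g = f(t) - B u(t) - (S w)(t). Strong monotonicity of A and the mixed condition on j make its
   solution W(eta, g) unique and Lipschitz in (eta, g); it exists by Banach's fixed point theorem
   applied to a proximal gradient step. So u = u0 + int_0^t w, where w is a fixed point of
   Lambda w = W(u0 + int_0^. w, f - B(u0 + int_0^. w) - S w), and Lambda is again
   history-dependent. Its Picard iterates satisfy |Lambda^(n+1) 0 - Lambda^n 0| <= M (L t)^n / n!,
   hence converge uniformly on compact intervals, and the same iterated-integral bound shows
   that the fixed point, and with it the solution, is unique. *)

section \<open>Proximal points and projections in Hilbert space\<close>

lemma norm_midpoint_diff_sq:
  fixes a b z :: "'a::real_inner"
  shows "(norm ((1/2) *\<^sub>R a + (1/2) *\<^sub>R b - z))\<^sup>2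
    = (norm (a - z))\<^sup>2 / 2 + (norm (b - z))\<^sup>2 / 2 - (norm (a - b))\<^sup>2 / 4"
proof -
  have "(1/2) *\<^sub>R a + (1/2) *\<^sub>R b - z = (1/2) *\<^sub>R ((a - z) + (b - z))"
    by (simp add: algebra_simps flip: scaleR_add_left)
  moreover have "a - b = (a - z) - (b - z)" by simp
  ultimately show ?thesis
    unfolding power2_norm_eq_inner
    by (simp add: inner_add_left inner_add_right inner_diff_left inner_diff_right
        inner_commute[of "b - z" "a - z"] field_simps)
qed

lemma norm_segment_diff_sq:
  fixes x v z :: "'a::real_inner"
  shows "(norm ((1 - t) *\<^sub>R x + t *\<^sub>R v - z))\<^sup>2
    = (norm (x - z))\<^sup>2 + 2 * t * inner (x - z) (v - x) + t\<^sup>2 * (norm (v - x))\<^sup>2"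
proof -
  have "(1 - t) *\<^sub>R x + t *\<^sub>R v - z = (x - z) + t *\<^sub>R (v - x)" by (simp add: algebra_simps)
  then show ?thesis
    unfolding power2_norm_eq_inner
    by (simp add: inner_add inner_diff inner_commute algebra_simps power2_eq_square)
qed

lemma bdd_below_dist_sq_plus_lipschitz:
  fixes K :: "'a::real_normed_vector set"
  assumes "k \<in> K" "L-lipschitz_on K \<phi>"
  shows "bdd_below ((\<lambda>x. (norm (x - z))\<^sup>2 / 2 + \<phi> x) ` K)"
proof (rule bdd_belowI2)
  fix x assume "x \<in> K"
  have "L \<ge> 0" using assms(2) by (simp add: lipschitz_on_def)
  have "\<phi> k - L * norm (x - k) \<le> \<phi> x"
    using lipschitz_onD[OF assms(2) \<open>x \<in> K\<close> assms(1)] by (simp add: dist_norm dist_real_def abs_le_iff)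
  moreover have "L * norm (x - k) \<le> L * norm (x - z) + L * norm (z - k)"
    using norm_triangle_ineq[of "x - z" "z - k"] \<open>L \<ge> 0\<close>
    by (simp flip: distrib_left add: mult_left_mono)
  moreover have "0 \<le> (norm (x - z) - L)\<^sup>2" by simp
  ultimately show "\<phi> k - L * norm (z - k) - L\<^sup>2 / 2 \<le> (norm (x - z))\<^sup>2 / 2 + \<phi> x"
    by (simp add: power2_eq_square algebra_simps)
qed

lemma norm_diff_sq_le_dist_sq_plus_convex:
  fixes K :: "'a::real_inner set"
  assumes "convex K" "convex_on K \<phi>" "a \<in> K" "b \<in> K"
    and m: "\<forall>y\<in>K. m \<le> (norm (y - z))\<^sup>2 / 2 + \<phi> y"
  shows "(norm (a - b))\<^sup>2 \<le> 4 * ((norm (a - z))\<^sup>2 / 2 + \<phi> a + (norm (b - z))\<^sup>2 / 2 + \<phi> b - 2 * m)"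
proof -
  define c where "c = (1/2) *\<^sub>R a + (1/2) *\<^sub>R b"
  have "c \<in> K" using assms(1,3,4) unfolding c_def by (intro convexD) auto
  then have "m \<le> (norm (c - z))\<^sup>2 / 2 + \<phi> c" using m by blast
  moreover have "\<phi> c \<le> \<phi> a / 2 + \<phi> b / 2"
    using convex_onD[OF assms(2), of "1/2" a b] assms(3,4) by (simp add: c_def)
  moreover have "(norm (c - z))\<^sup>2 = (norm (a - z))\<^sup>2 / 2 + (norm (b - z))\<^sup>2 / 2 - (norm (a - b))\<^sup>2 / 4"
    unfolding c_def by (rule norm_midpoint_diff_sq)
  ultimately show ?thesis by argo
qed

lemma exists_min_dist_sq_plus_convex:
  fixes K :: "'a::{real_inner,complete_space} set" and \<phi> :: "'a \<Rightarrow> real"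
  assumes "convex K" "closed K" "K \<noteq> {}" "convex_on K \<phi>" "L-lipschitz_on K \<phi>"
  shows "\<exists>x\<in>K. \<forall>y\<in>K. (norm (x - z))\<^sup>2 / 2 + \<phi> x \<le> (norm (y - z))\<^sup>2 / 2 + \<phi> y"
proof -
  define F where "F x = (norm (x - z))\<^sup>2 / 2 + \<phi> x" for x
  define m where "m = Inf (F ` K)"
  obtain k where "k \<in> K" using assms(3) by blast
  from bdd_below_dist_sq_plus_lipschitz[OF this assms(5)] have "bdd_below (F ` K)"
    unfolding F_def .
  then have m_le: "\<forall>y\<in>K. m \<le> F y" unfolding m_def by (simp add: cInf_lower)
  have "\<exists>x\<in>K. F x < m + 1 / (real n + 1)" for n
    using cInf_lessD[of "F ` K" "m + 1 / (real n + 1)"] assms(3) by (auto simp: m_def)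
  then obtain X where X: "\<And>n. X n \<in> K" "\<And>n. F (X n) < m + 1 / (real n + 1)" by metis
  have "Cauchy X"
  proof (rule metric_CauchyI)
    fix e :: real assume e: "e > 0"
    obtain M :: nat where M: "8 / e\<^sup>2 < real M" using reals_Archimedean2 by blast
    have "dist (X p) (X q) < e" if "p \<ge> M" "q \<ge> M" for p q
    proof -
      have "(norm (X p - X q))\<^sup>2 \<le> 4 * (1 / (real p + 1) + 1 / (real q + 1))"
        using norm_diff_sq_le_dist_sq_plus_convex[OF assms(1,4) X(1) X(1) m_le[unfolded F_def], of p q]
          X(2)[of p] X(2)[of q] unfolding F_def by simp
      also have "\<dots> \<le> 4 * (1 / (real M + 1) + 1 / (real M + 1))"
        using that by (intro mult_left_mono add_mono divide_left_mono) auto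
      also have "\<dots> < e\<^sup>2"
        using M e by (simp add: field_simps) (smt (verit) zero_less_power)
      finally show ?thesis
        using e by (simp add: dist_norm power_less_imp_less_base)
    qed
    then show "\<exists>M. \<forall>m\<ge>M. \<forall>n\<ge>M. dist (X m) (X n) < e" by blast
  qed
  then obtain x where lim: "X \<longlonglongrightarrow> x" using Cauchy_convergent_iff convergent_def by blast
  have x: "x \<in> K" using closed_sequentially[OF assms(2) X(1) lim] .
  have "continuous_on K F"
    unfolding F_def by (auto intro!: continuous_intros lipschitz_on_continuous_on[OF assms(5)])
  then have "(\<lambda>n. F (X n)) \<longlonglongrightarrow> F x"
    by (rule continuous_on_tendsto_compose[OF _ lim x]) (simp add: X(1))
  moreover have "(\<lambda>n. m + 1 / (real n + 1)) \<longlonglongrightarrow> m"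
    using LIMSEQ_inverse_real_of_nat_add[of m] by (simp add: inverse_eq_divide add.commute)
  ultimately have "F x \<le> m"
    by (rule LIMSEQ_le) (use X(2) less_imp_le in blast)
  then show ?thesis using x m_le unfolding F_def by (meson order_trans)
qed

lemma min_dist_sq_plus_convex_imp_variational_ineq:
  fixes K :: "'a::real_inner set" and \<phi> :: "'a \<Rightarrow> real"
  assumes "convex K" "convex_on K \<phi>" "x \<in> K"
    and min: "\<forall>y\<in>K. (norm (x - z))\<^sup>2 / 2 + \<phi> x \<le> (norm (y - z))\<^sup>2 / 2 + \<phi> y"
    and "v \<in> K"
  shows "0 \<le> inner (x - z) (v - x) + \<phi> v - \<phi> x"
proof -
  define Q where "Q = inner (x - z) (v - x) + \<phi> v - \<phi> x"
  have Q_ge: "0 \<le> Q + t * (norm (v - x))\<^sup>2 / 2" if t: "0 < t" "t \<le> 1" for t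
  proof -
    have "(1 - t) *\<^sub>R x + t *\<^sub>R v \<in> K" using assms(1,3,5) t by (simp add: convexD)
    then have "(norm (x - z))\<^sup>2 / 2 + \<phi> x
        \<le> (norm (x - z))\<^sup>2 / 2 + t * inner (x - z) (v - x) + t\<^sup>2 * (norm (v - x))\<^sup>2 / 2
          + \<phi> ((1 - t) *\<^sub>R x + t *\<^sub>R v)"
      using min norm_segment_diff_sq[of t x v z] by (fastforce simp: field_simps)
    moreover have "\<phi> ((1 - t) *\<^sub>R x + t *\<^sub>R v) \<le> (1 - t) * \<phi> x + t * \<phi> v"
      using convex_onD[OF assms(2), of t x v] t assms(3,5) by simp
    ultimately have "0 \<le> t * (Q + t * (norm (v - x))\<^sup>2 / 2)"
      unfolding Q_def by (simp add: algebra_simps power2_eq_square)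
    then show ?thesis using t by (simp add: zero_le_mult_iff)
  qed
  show ?thesis
  proof (rule ccontr)
    assume "\<not> ?thesis"
    then have Q: "Q < 0" by (simp add: Q_def)
    have den: "0 < (norm (v - x))\<^sup>2 + 1" by (simp add: add_nonneg_pos)
    define t where "t = min 1 (- Q / ((norm (v - x))\<^sup>2 + 1))"
    have t: "0 < t" "t \<le> 1" unfolding t_def using divide_neg_pos[OF Q den] by auto
    have "t * (norm (v - x))\<^sup>2 \<le> - Q / ((norm (v - x))\<^sup>2 + 1) * (norm (v - x))\<^sup>2"
      unfolding t_def by (intro mult_right_mono) auto
    also have "\<dots> = - Q * ((norm (v - x))\<^sup>2 / ((norm (v - x))\<^sup>2 + 1))" by simp
    also have "\<dots> \<le> - Q"
      using Q den by (intro mult_left_le) auto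
    finally show False using Q_ge[OF t] Q by simp
  qed
qed

lemma exists_proximal_point:
  fixes K :: "'a::{real_inner,complete_space} set" and \<phi> :: "'a \<Rightarrow> real"
  assumes "convex K" "closed K" "K \<noteq> {}" "convex_on K \<phi>" "L-lipschitz_on K \<phi>"
  shows "\<exists>x\<in>K. \<forall>v\<in>K. 0 \<le> inner (x - z) (v - x) + \<phi> v - \<phi> x"
  using exists_min_dist_sq_plus_convex[OF assms, of z]
    min_dist_sq_plus_convex_imp_variational_ineq[OF assms(1,4)] by blast

lemma proximal_point_nonexpansive:
  fixes x1 x2 z1 z2 :: "'a::real_inner"
  assumes "0 \<le> inner (x1 - z1) (x2 - x1) + \<phi> x2 - \<phi> x1"
    and "0 \<le> inner (x2 - z2) (x1 - x2) + \<phi> x1 - \<phi> x2"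
  shows "norm (x1 - x2) \<le> norm (z1 - z2)"
proof -
  have "inner (x1 - x2) (x1 - x2) \<le> inner (z1 - z2) (x1 - x2)"
    using add_nonneg_nonneg[OF assms] by (simp add: inner_diff_left inner_diff_right inner_commute)
  also have "\<dots> \<le> norm (z1 - z2) * norm (x1 - x2)" by (rule Cauchy_Schwarz_ineq2[THEN abs_le_D1])
  finally have "norm (x1 - x2) * norm (x1 - x2) \<le> norm (z1 - z2) * norm (x1 - x2)"
    by (simp add: power2_norm_eq_inner[symmetric] power2_eq_square)
  then show ?thesis by (cases "x1 = x2") auto
qed

lemma strongly_monotone_gradient_step_contraction:
  fixes A :: "'a::real_inner \<Rightarrow> 'a"
  assumes "mA > 0" "LA > 0"
    and mono: "mA * (norm (w1 - w2))\<^sup>2 \<le> inner (A w1 - A w2) (w1 - w2)"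
    and lip: "norm (A w1 - A w2) \<le> LA * norm (w1 - w2)"
  shows "norm ((w1 - (mA / LA\<^sup>2) *\<^sub>R A w1) - (w2 - (mA / LA\<^sup>2) *\<^sub>R A w2))
    \<le> sqrt (max 0 (1 - mA\<^sup>2 / LA\<^sup>2)) * norm (w1 - w2)"
proof -
  define \<rho> where "\<rho> = mA / LA\<^sup>2"
  define d where "d = w1 - w2"
  define \<Delta> where "\<Delta> = A w1 - A w2"
  have step: "(w1 - \<rho> *\<^sub>R A w1) - (w2 - \<rho> *\<^sub>R A w2) = d - \<rho> *\<^sub>R \<Delta>"
    by (simp add: d_def \<Delta>_def algebra_simps)
  have "(norm ((w1 - \<rho> *\<^sub>R A w1) - (w2 - \<rho> *\<^sub>R A w2)))\<^sup>2
      = (norm d)\<^sup>2 - 2 * \<rho> * inner \<Delta> d + \<rho>\<^sup>2 * (norm \<Delta>)\<^sup>2"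
    unfolding step power2_norm_eq_inner
    by (simp add: inner_diff_left inner_diff_right inner_commute algebra_simps power2_eq_square)
  also have "\<dots> \<le> (norm d)\<^sup>2 - 2 * \<rho> * (mA * (norm d)\<^sup>2) + \<rho>\<^sup>2 * (LA * norm d)\<^sup>2"
    using mono lip assms(1,2)
    by (intro add_mono diff_mono mult_left_mono power_mono) (auto simp: \<rho>_def \<Delta>_def d_def)
  also have "\<dots> = (1 - mA\<^sup>2 / LA\<^sup>2) * (norm d)\<^sup>2"
    using \<open>LA > 0\<close> by (simp add: \<rho>_def field_simps power2_eq_square)
  also have "\<dots> \<le> (sqrt (max 0 (1 - mA\<^sup>2 / LA\<^sup>2)) * norm d)\<^sup>2"
    by (simp add: power_mult_distrib mult_right_mono)
  finally show ?thesis
    unfolding \<rho>_def d_def by (rule power2_le_imp_le) simp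
qed

lemma exists_projection:
  fixes K :: "'a::{real_inner,complete_space} set"
  assumes "convex K" "closed K" "K \<noteq> {}"
  shows "\<exists>p\<in>K. \<forall>v\<in>K. inner (z - p) (v - p) \<le> 0"
proof -
  have "convex_on K (\<lambda>_. 0::real)" using assms(1) by (simp only: convex_on_const)
  from exists_proximal_point[OF assms this lipschitz_on_constant]
  have "\<exists>p\<in>K. \<forall>v\<in>K. 0 \<le> inner (p - z) (v - p)" by simp
  then show ?thesis by (metis add_0_right diff_0_right inner_minus_left minus_diff_eq neg_0_le_iff_le)
qed

lemma separation_closed_convex_cone:
  fixes K :: "'a::{real_inner,complete_space} set"
  assumes "convex_cone K" "closed K" "w \<notin> K"
  shows "\<exists>p. (\<forall>v\<in>K. inner p v \<le> 0) \<and> inner p w > 0"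
proof -
  have K: "convex K" "K \<noteq> {}" using assms(1) by (auto simp: convex_cone_def)
  have K_scaleR: "c *\<^sub>R x \<in> K" if "x \<in> K" "0 \<le> c" for x c
    using assms(1) that by (simp add: convex_cone_iff)
  obtain q where q: "q \<in> K" "\<And>v. v \<in> K \<Longrightarrow> inner (w - q) (v - q) \<le> 0"
    using exists_projection[OF K(1) assms(2) K(2)] by blast
  define p where "p = w - q"
  have "inner p (0 - q) \<le> 0" "inner p (2 *\<^sub>R q - q) \<le> 0"
    using q(2)[OF K_scaleR[OF q(1), of 0]] q(2)[OF K_scaleR[OF q(1), of 2]]
    unfolding p_def by simp_all
  then have pq: "inner p q = 0" by (simp add: scaleR_2 inner_diff_right)
  have "inner p v \<le> 0" if "v \<in> K" for v
    using q(2)[OF that] pq by (simp add: p_def inner_diff_right)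
  moreover have "inner p w = inner p p" using pq by (simp add: p_def inner_diff_right)
  moreover have "p \<noteq> 0" using q(1) assms(3) by (auto simp: p_def)
  ultimately show ?thesis by (intro exI[of _ p]) auto
qed

lemma riesz_representation:
  fixes l :: "'a::{real_inner,complete_space} \<Rightarrow> real"
  assumes l: "bounded_linear l"
  shows "\<exists>r. \<forall>x. l x = inner x r"
proof (cases "\<forall>x. l x = 0")
  case True
  then show ?thesis by (intro exI[of _ 0]) simp
next
  case False
  then obtain z where lz: "l z \<noteq> 0" by auto
  interpret l: bounded_linear l by (fact l)
  define N where "N = {x. l x = 0}"
  have "convex N" unfolding N_def convex_def by (simp add: l.add l.scaleR)
  moreover have "closed N" unfolding N_def
    by (intro closed_Collect_eq continuous_intros l.continuous_on continuous_on_id)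
  moreover have "N \<noteq> {}" by (auto simp: N_def intro: l.zero)
  ultimately obtain q where q: "q \<in> N" "\<And>v. v \<in> N \<Longrightarrow> inner (z - q) (v - q) \<le> 0"
    using exists_projection by blast
  define p where "p = z - q"
  have lp: "l p = l z" using q(1) by (simp add: p_def N_def l.diff)
  have orth: "inner p v = 0" if "v \<in> N" for v
  proof -
    have "q + v \<in> N" "q - v \<in> N" using that q(1) by (auto simp: N_def l.add l.diff)
    then show ?thesis using q(2)[of "q + v"] q(2)[of "q - v"] by (simp add: p_def)
  qed
  have pp: "inner p p \<noteq> 0" using lp lz by auto
  show ?thesis
  proof (intro exI[of _ "(l p / inner p p) *\<^sub>R p"] allI)
    fix x
    have "x - (l x / l p) *\<^sub>R p \<in> N" using lp lz by (simp add: N_def l.diff l.scaleR)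
    then have "inner p x = (l x / l p) * inner p p"
      using orth[of "x - (l x / l p) *\<^sub>R p"] by (simp add: inner_diff_right)
    then show "l x = inner x ((l p / inner p p) *\<^sub>R p)"
      using pp lp lz by (simp add: inner_commute field_simps)
  qed
qed

section \<open>Weak primitives\<close>

text \<open>The library's Henstock--Kurzweil integral needs a codomain of class \<open>banach\<close>, which the
  sort \<open>{real_inner, complete_space}\<close> does not entail; so the primitive of \<open>w\<close> is defined
  weakly, through the Riesz representation.\<close>
definition primitive :: "(real \<Rightarrow> 'a::real_inner) \<Rightarrow> real \<Rightarrow> 'a" where
  "primitive w t = (SOME r. \<forall>e. inner r e = integral {0..t} (\<lambda>s. inner (w s) e))"

lemma inner_primitive:
  fixes w :: "real \<Rightarrow> 'a::{real_inner,complete_space}"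
  assumes w: "continuous_on {0..t} w"
  shows "inner (primitive w t) e = integral {0..t} (\<lambda>s. inner (w s) e)"
proof -
  define l where "l e = integral {0..t} (\<lambda>s. inner (w s) e)" for e
  have int: "(\<lambda>s. inner (w s) e) integrable_on {0..t}" for e
    by (intro integrable_continuous_real continuous_intros w)
  have "bounded_linear l"
  proof (rule bounded_linear_intro)
    show "l (x + y) = l x + l y" for x y unfolding l_def inner_add_right by (rule integral_add[OF int int])
    show "l (c *\<^sub>R x) = c *\<^sub>R l x" for c x unfolding l_def inner_scaleR_right by simp
    show "norm (l x) \<le> norm x * integral {0..t} (\<lambda>s. norm (w s))" for x
    proof -
      have "norm (l x) \<le> integral {0..t} (\<lambda>s. norm (w s) * norm x)"
        unfolding l_def
        by (rule integral_norm_bound_integral[OF int integrable_continuous_real])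
          (auto intro!: continuous_intros w simp: Cauchy_Schwarz_ineq2)
      then show ?thesis by (simp add: mult.commute)
    qed
  qed
  then obtain r where "\<forall>e. inner r e = l e" using riesz_representation by (metis inner_commute)
  then have "\<forall>e. inner (primitive w t) e = l e" unfolding primitive_def l_def by (rule someI)
  then show ?thesis by (simp add: l_def)
qed

lemma eq_if_inner_eq:
  fixes x y :: "'a::real_inner"
  assumes "\<And>e. inner x e = inner y e"
  shows "x = y"
proof -
  have "inner (x - y) (x - y) = 0" using assms[of "x - y"] by (simp add: inner_diff_left)
  then show ?thesis by simp
qed

lemma norm_le_integral_norm_if_inner_eq:
  fixes D :: "'a::real_inner" and a b :: real
  assumes D: "\<And>e. inner D e = integral {a..b} (\<lambda>s. inner (v s) e)"
    and v: "continuous_on {a..b} v"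
  shows "norm D \<le> integral {a..b} (\<lambda>s. norm (v s))"
proof (cases "D = 0")
  case True
  then show ?thesis
    by (auto intro!: Henstock_Kurzweil_Integration.integral_nonneg integrable_continuous_real
        continuous_intros v)
next
  case False
  have "(norm D)\<^sup>2 = integral {a..b} (\<lambda>s. inner (v s) D)"
    by (simp add: power2_norm_eq_inner D)
  also have "\<dots> \<le> integral {a..b} (\<lambda>s. norm (v s) * norm D)"
    by (rule integral_le[OF integrable_continuous_real integrable_continuous_real])
       (auto intro!: continuous_intros v simp: order_trans[OF _ Cauchy_Schwarz_ineq2])
  also have "\<dots> = integral {a..b} (\<lambda>s. norm (v s)) * norm D" by simp
  finally show ?thesis using False by (simp add: power2_eq_square)
qed

lemma primitive_0 [simp]: "primitive (w :: real \<Rightarrow> 'a::{real_inner,complete_space}) 0 = 0"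
  using inner_primitive[of 0 w "primitive w 0"] by simp

lemma inner_primitive_diff:
  fixes w :: "real \<Rightarrow> 'a::{real_inner,complete_space}"
  assumes w: "continuous_on {0..b} w" and "0 \<le> a" "a \<le> b"
  shows "inner (primitive w b - primitive w a) e = integral {a..b} (\<lambda>s. inner (w s) e)"
proof -
  have "integral {0..a} (\<lambda>s. inner (w s) e) + integral {a..b} (\<lambda>s. inner (w s) e)
      = integral {0..b} (\<lambda>s. inner (w s) e)"
    using assms
    by (intro Henstock_Kurzweil_Integration.integral_combine integrable_continuous_real
        continuous_intros w) auto
  moreover have "continuous_on {0..a} w" using w assms by (auto elim: continuous_on_subset)
  ultimately show ?thesis
    using w by (simp add: inner_diff_left inner_primitive)
qed

lemma norm_primitive_diff_le:
  fixes w :: "real \<Rightarrow> 'a::{real_inner,complete_space}"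
  assumes w: "continuous_on {0..b} w" and "0 \<le> a" "a \<le> b"
  shows "norm (primitive w b - primitive w a - (b - a) *\<^sub>R c) \<le> integral {a..b} (\<lambda>s. norm (w s - c))"
proof (rule norm_le_integral_norm_if_inner_eq)
  have w': "continuous_on {a..b} w" using w assms by (auto elim: continuous_on_subset)
  show "continuous_on {a..b} (\<lambda>s. w s - c)" by (intro continuous_intros w')
  fix e
  have "integral {a..b} (\<lambda>s. inner (w s - c) e) = integral {a..b} (\<lambda>s. inner (w s) e) - (b - a) * inner c e"
    unfolding inner_diff_left
    using assms by (subst integral_diff) (auto intro!: integrable_continuous_real continuous_intros w')
  then show "inner (primitive w b - primitive w a - (b - a) *\<^sub>R c) e = integral {a..b} (\<lambda>s. inner (w s - c) e)"
    using inner_primitive_diff[OF assms, of e] by (simp add: inner_diff_left)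
qed

lemma norm_primitive_diff_primitive_le:
  fixes w1 w2 :: "real \<Rightarrow> 'a::{real_inner,complete_space}"
  assumes "continuous_on {0..t} w1" "continuous_on {0..t} w2"
  shows "norm (primitive w1 t - primitive w2 t) \<le> integral {0..t} (\<lambda>s. norm (w1 s - w2 s))"
proof (rule norm_le_integral_norm_if_inner_eq)
  fix e
  show "inner (primitive w1 t - primitive w2 t) e = integral {0..t} (\<lambda>s. inner (w1 s - w2 s) e)"
    unfolding inner_diff_left inner_primitive[OF assms(1)] inner_primitive[OF assms(2)]
    by (subst integral_diff) (auto intro!: integrable_continuous_real continuous_intros assms)
qed (auto intro!: continuous_intros assms)

lemma primitive_has_vector_derivative:
  fixes w :: "real \<Rightarrow> 'a::{real_inner,complete_space}"
  assumes w: "continuous_on {0..T} w" and t: "t \<in> {0..T}"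
  shows "(primitive w has_vector_derivative w t) (at t within {0..T})"
  unfolding has_vector_derivative_def has_derivative_within_alt
proof (intro conjI allI impI bounded_linear_scaleR_left)
  fix e :: real assume "e > 0"
  then obtain d where d: "d > 0" "\<And>s. s \<in> {0..T} \<Longrightarrow> dist s t < d \<Longrightarrow> dist (w s) (w t) < e"
    using w t unfolding continuous_on_iff by metis
  have "norm (primitive w y - primitive w t - (y - t) *\<^sub>R w t) \<le> e * norm (y - t)"
    if y: "y \<in> {0..T}" "norm (y - t) < d" for y
  proof -
    have near: "norm (w s - w t) \<le> e" if "s \<in> {min t y..max t y}" for s
    proof -
      have "s \<in> {0..T}" "dist s t < d"
        using that y t by (auto simp: dist_real_def min_def max_def split: if_splits)
      then show ?thesis using d(2) by (simp add: dist_norm less_imp_le)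
    qed
    have cont: "continuous_on {0..max t y} w" by (rule continuous_on_subset[OF w]) (use t y in auto)
    have "norm (primitive w (max t y) - primitive w (min t y) - (max t y - min t y) *\<^sub>R w t)
        \<le> integral {min t y..max t y} (\<lambda>s. norm (w s - w t))"
      using t y by (intro norm_primitive_diff_le cont) auto
    also have "\<dots> \<le> integral {min t y..max t y} (\<lambda>s. e)"
      using t y
      by (intro integral_le integrable_continuous_real near continuous_intros
          continuous_on_subset[OF cont]) auto
    also have "\<dots> = e * norm (y - t)" using \<open>e > 0\<close> by (simp add: max_def min_def)
    finally show ?thesis
      by (cases "t \<le> y") (auto simp: max_def min_def norm_minus_commute algebra_simps)
  qed
  then show "\<exists>d>0. \<forall>y\<in>{0..T}. norm (y - t) < d \<longrightarrow>
      norm (primitive w y - primitive w t - (y - t) *\<^sub>R w t) \<le> e * norm (y - t)"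
    using d(1) by blast
qed

lemma eq_primitive_if_has_vector_derivative:
  fixes u :: "real \<Rightarrow> 'a::{real_inner,complete_space}"
  assumes "0 \<le> t"
    and u: "\<And>s. s \<in> {0..t} \<Longrightarrow> (u has_vector_derivative u' s) (at s within {0..t})"
    and u': "continuous_on {0..t} u'"
  shows "u t = u 0 + primitive u' t"
proof (rule eq_if_inner_eq)
  fix e
  have "((\<lambda>s. inner (u' s) e) has_integral (inner (u t) e - inner (u 0) e)) {0..t}"
  proof (rule fundamental_theorem_of_calculus[OF assms(1)])
    fix s assume "s \<in> {0..t}"
    from has_derivative_inner_left[OF u[OF this, unfolded has_vector_derivative_def]]
    show "((\<lambda>x. inner (u x) e) has_vector_derivative inner (u' s) e) (at s within {0..t})"
      by (simp add: has_vector_derivative_def mult.commute)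
  qed
  then show "inner (u t) e = inner (u 0 + primitive u' t) e"
    by (simp add: inner_add_left inner_primitive[OF u'] integral_unique)
qed

lemma primitive_cong:
  assumes "\<And>s. s \<in> {0..t} \<Longrightarrow> w1 s = w2 s"
  shows "primitive w1 t = primitive w2 t"
proof -
  have "integral {0..t} (\<lambda>s. inner (w1 s) e) = integral {0..t} (\<lambda>s. inner (w2 s) e)" for e
    using assms by (intro integral_cong) simp
  then show ?thesis unfolding primitive_def by simp
qed

section \<open>Fixed points of history-dependent operators\<close>

lemma integral_power_real:
  fixes t :: real
  assumes "0 \<le> t"
  shows "integral {0..t} (\<lambda>s. s ^ n) = t ^ Suc n / Suc n"
proof -
  have "((\<lambda>s. s ^ n) has_integral (t ^ Suc n / Suc n - 0 ^ Suc n / Suc n)) {0..t}"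
  proof (rule fundamental_theorem_of_calculus[OF assms])
    fix x :: real
    have "((\<lambda>s. s ^ Suc n / Suc n) has_real_derivative Suc n * x ^ n / Suc n) (at x)"
      using DERIV_pow[of "Suc n" x] by (intro DERIV_cdivide) simp
    then show "((\<lambda>s. s ^ Suc n / Suc n) has_vector_derivative x ^ n) (at x within {0..t})"
      by (simp add: has_real_derivative_iff_has_vector_derivative has_vector_derivative_at_within)
  qed
  then show ?thesis by (simp add: integral_unique)
qed

lemma iterated_integral_inequality_bound:
  fixes \<psi> :: "nat \<Rightarrow> real \<Rightarrow> real"
  assumes cont: "\<And>n. continuous_on {0..T} (\<psi> n)"
    and bound: "\<And>t. t \<in> {0..T} \<Longrightarrow> \<psi> 0 t \<le> M"
    and step: "\<And>n t. t \<in> {0..T} \<Longrightarrow> \<psi> (Suc n) t \<le> C * integral {0..t} (\<psi> n)"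
    and "C \<ge> 0" "t \<in> {0..T}"
  shows "\<psi> n t \<le> M * (C * t) ^ n / fact n"
  using \<open>t \<in> {0..T}\<close>
proof (induction n arbitrary: t)
  case 0
  then show ?case using bound by simp
next
  case (Suc n)
  have "\<psi> (Suc n) t \<le> C * integral {0..t} (\<psi> n)" using step Suc.prems by blast
  also have "\<dots> \<le> C * integral {0..t} (\<lambda>s. M * C ^ n / fact n * s ^ n)"
  proof (intro mult_left_mono integral_le integrable_continuous_real continuous_intros
      continuous_on_subset[OF cont] \<open>C \<ge> 0\<close>)
    fix s assume "s \<in> {0..t}"
    then have "\<psi> n s \<le> M * (C * s) ^ n / fact n" using Suc by simp
    then show "\<psi> n s \<le> M * C ^ n / fact n * s ^ n" by (simp add: power_mult_distrib)
  qed (use Suc.prems in auto)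
  also have "\<dots> = M * (C * t) ^ Suc n / fact (Suc n)"
    using Suc.prems by (simp add: integral_power_real power_mult_distrib field_simps)
  finally show ?case .
qed

lemma integral_inequality_imp_eq_0:
  fixes \<phi> :: "real \<Rightarrow> real"
  assumes cont: "continuous_on {0..T} \<phi>" and nonneg: "\<And>t. t \<in> {0..T} \<Longrightarrow> 0 \<le> \<phi> t"
    and ineq: "\<And>t. t \<in> {0..T} \<Longrightarrow> \<phi> t \<le> C * integral {0..t} \<phi>"
    and "C \<ge> 0" and t: "t \<in> {0..T}"
  shows "\<phi> t = 0"
proof -
  obtain M where M: "\<And>s. s \<in> {0..T} \<Longrightarrow> \<phi> s \<le> M"
    using compact_attains_sup[OF compact_continuous_image[OF cont compact_Icc]] t by fastforce
  have "\<phi> t \<le> M * (C * t) ^ n / fact n" for n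
    by (rule iterated_integral_inequality_bound[where \<psi> = "\<lambda>_. \<phi>"]) (use assms M in auto)
  moreover have "(\<lambda>n. M * (C * t) ^ n / fact n) \<longlonglongrightarrow> 0"
    using tendsto_mult_right_zero[OF summable_LIMSEQ_zero[OF summable_exp], of M "C * t"]
    by (simp add: field_simps)
  ultimately have "\<phi> t \<le> 0" by (intro LIMSEQ_le_const) auto
  then show ?thesis using nonneg[OF t] by simp
qed

lemma uniformly_Cauchy_on_if_summable_increments:
  fixes f :: "nat \<Rightarrow> 'b \<Rightarrow> 'a::real_normed_vector"
  assumes le: "\<And>n x. x \<in> S \<Longrightarrow> norm (f (Suc n) x - f n x) \<le> a n" and "summable a"
  shows "uniformly_Cauchy_on S f"
proof (rule uniformly_Cauchy_onI')
  fix e :: real assume "e > 0"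
  have "Cauchy (\<lambda>n. sum a {..<n})"
    using \<open>summable a\<close> by (simp add: summable_iff_convergent Cauchy_convergent_iff)
  with \<open>e > 0\<close> obtain N where N: "\<And>m n. m \<ge> N \<Longrightarrow> n \<ge> N \<Longrightarrow> dist (sum a {..<m}) (sum a {..<n}) < e"
    unfolding Cauchy_def by blast
  have "dist (f m x) (f n x) < e" if "x \<in> S" "N \<le> m" "m < n" for x m n
  proof -
    have "dist (f m x) (f n x) = norm (\<Sum>k = m..<n. f (Suc k) x - f k x)"
      using sum_Suc_diff'[of m n "\<lambda>k. f k x"] that by (simp add: dist_norm norm_minus_commute)
    also have "\<dots> \<le> (\<Sum>k = m..<n. a k)"
      by (rule order_trans[OF norm_sum sum_mono]) (use le[OF that(1)] in simp)
    also have "\<dots> = sum a {..<n} - sum a {..<m}"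
      using sum_diff_nat_ivl[of 0 m n a] that by (simp add: lessThan_atLeast0)
    also have "\<dots> < e" using N[of m n] that by (simp add: dist_real_def)
    finally show ?thesis .
  qed
  then show "\<exists>M. \<forall>x\<in>S. \<forall>m\<ge>M. \<forall>n>m. dist (f m x) (f n x) < e" by blast
qed

locale time_interval =
  fixes I :: "real set"
  assumes time_interval: "(\<exists>T>0. I = {0..T}) \<or> I = {0..}"
begin

lemma nonneg: "t \<in> I \<Longrightarrow> 0 \<le> t"
  using time_interval by auto

lemma Icc_subset: "T \<in> I \<Longrightarrow> {0..T} \<subseteq> I"
  using time_interval by auto

lemma at_within_eq_Icc:
  assumes "t \<in> I"
  obtains T where "T \<in> I" "t \<in> {0..T}" "at t within I = at t within {0..T}"
  using time_interval
proof
  assume "\<exists>T>0. I = {0..T}"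
  then obtain T where "I = {0..T}" by blast
  then show thesis using that[of T] assms by auto
next
  assume I: "I = {0..}"
  have "at t within {0..} = at t within {0..t + 1}"
    by (rule at_within_nhd[of t "{..<t + 1}"]) auto
  then show thesis using that[of "t + 1"] assms I by auto
qed

lemma continuous_on_if_Icc:
  assumes "\<And>T. T \<in> I \<Longrightarrow> continuous_on {0..T} g"
  shows "continuous_on I g"
  unfolding continuous_on_eq_continuous_within
proof
  fix t assume "t \<in> I"
  then obtain T where T: "T \<in> I" "t \<in> {0..T}" "at t within I = at t within {0..T}"
    by (rule at_within_eq_Icc)
  then show "continuous (at t within I) g"
    using assms[OF T(1)] by (simp add: continuous_on_eq_continuous_within continuous_within)
qed

lemma history_dependent_Icc:
  assumes "history_dependent I S" "T \<in> I"
  obtains L where "L > 0" "\<And>w1 w2 t. continuous_on I w1 \<Longrightarrow> continuous_on I w2 \<Longrightarrow> t \<in> {0..T} \<Longrightarrow>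
    norm (S w1 t - S w2 t) \<le> L * integral {0..t} (\<lambda>s. norm (w1 s - w2 s))"
  using assms Icc_subset unfolding history_dependent_def by (meson compact_Icc)

lemma continuous_on_primitive:
  fixes w :: "real \<Rightarrow> 'a::{real_inner,complete_space}"
  assumes "continuous_on I w"
  shows "continuous_on I (primitive w)"
proof (rule continuous_on_if_Icc)
  fix T assume "T \<in> I"
  then have "continuous_on {0..T} w" using continuous_on_subset[OF assms Icc_subset] by blast
  from primitive_has_vector_derivative[OF this] show "continuous_on {0..T} (primitive w)"
    unfolding continuous_on_eq_continuous_within using has_vector_derivative_continuous by blast
qed

end

locale history_dependent_operator = time_interval +
  fixes \<Lambda> :: "(real \<Rightarrow> 'a::{real_normed_vector,complete_space}) \<Rightarrow> real \<Rightarrow> 'a"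
  assumes continuous_on_image: "\<And>w. continuous_on I w \<Longrightarrow> continuous_on I (\<Lambda> w)"
    and history_dependent: "history_dependent I \<Lambda>"
begin

definition picard :: "nat \<Rightarrow> real \<Rightarrow> 'a" where
  "picard n = (\<Lambda> ^^ n) (\<lambda>_. 0)"

lemma picard_Suc: "picard (Suc n) = \<Lambda> (picard n)"
  by (simp add: picard_def)

lemma continuous_on_picard: "continuous_on I (picard n)"
  by (induction n) (simp_all add: picard_Suc continuous_on_image picard_def[of 0])

lemma norm_picard_Suc_diff_le:
  assumes T: "T \<in> I"
  obtains M L where "\<And>n t. t \<in> {0..T} \<Longrightarrow> norm (picard (Suc n) t - picard n t) \<le> M * (L * T) ^ n / fact n"
proof -
  obtain L where "L > 0" and L: "\<And>w1 w2 t. continuous_on I w1 \<Longrightarrow> continuous_on I w2 \<Longrightarrow>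
      t \<in> {0..T} \<Longrightarrow> norm (\<Lambda> w1 t - \<Lambda> w2 t) \<le> L * integral {0..t} (\<lambda>s. norm (w1 s - w2 s))"
    using history_dependent_Icc[OF history_dependent T] by blast
  define \<psi> where "\<psi> n t = norm (picard (Suc n) t - picard n t)" for n t
  have cont: "continuous_on {0..T} (\<psi> n)" for n
    unfolding \<psi>_def
    by (intro continuous_intros continuous_on_subset[OF continuous_on_picard Icc_subset[OF T]])
  obtain M where M: "\<And>t. t \<in> {0..T} \<Longrightarrow> \<psi> 0 t \<le> M"
    using compact_attains_sup[OF compact_continuous_image[OF cont compact_Icc]] nonneg[OF T]
    by fastforce
  have "M \<ge> 0" using M[of 0] nonneg[OF T] by (simp add: \<psi>_def order_trans[OF norm_ge_zero])
  have "\<psi> n t \<le> M * (L * T) ^ n / fact n" if t: "t \<in> {0..T}" for n t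
  proof -
    have "\<psi> n t \<le> M * (L * t) ^ n / fact n"
    proof (rule iterated_integral_inequality_bound[where \<psi> = \<psi> and C = L and T = T])
      show "\<psi> (Suc n) t \<le> L * integral {0..t} (\<psi> n)" if "t \<in> {0..T}" for n t
        using L[OF continuous_on_picard continuous_on_picard that, of "Suc n" n]
        by (simp only: \<psi>_def[abs_def] picard_Suc[symmetric])
    qed (use cont M \<open>L > 0\<close> t in auto)
    also have "\<dots> \<le> M * (L * T) ^ n / fact n"
      using t \<open>L > 0\<close> \<open>M \<ge> 0\<close> by (intro divide_right_mono mult_left_mono power_mono) auto
    finally show ?thesis .
  qed
  then show thesis using that unfolding \<psi>_def by blast
qed

lemma uniformly_Cauchy_on_picard:
  assumes "T \<in> I"
  shows "uniformly_Cauchy_on {0..T} picard"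
proof -
  obtain M L where "\<And>n t. t \<in> {0..T} \<Longrightarrow> norm (picard (Suc n) t - picard n t) \<le> M * (L * T) ^ n / fact n"
    using norm_picard_Suc_diff_le[OF assms] by blast
  moreover have "summable (\<lambda>n. M * (L * T) ^ n / fact n)"
    using summable_mult[OF summable_exp[of "L * T"], of M] by (simp add: field_simps)
  ultimately show ?thesis by (rule uniformly_Cauchy_on_if_summable_increments)
qed

definition fixed_point :: "real \<Rightarrow> 'a" where
  "fixed_point t = lim (\<lambda>n. picard n t)"

lemma uniform_limit_picard: "T \<in> I \<Longrightarrow> uniform_limit {0..T} picard fixed_point sequentially"
  using Cauchy_uniformly_convergent[OF uniformly_Cauchy_on_picard]
  unfolding uniformly_convergent_uniform_limit_iff fixed_point_def[abs_def] by blast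

lemma continuous_on_fixed_point: "continuous_on I fixed_point"
proof (rule continuous_on_if_Icc)
  fix T assume T: "T \<in> I"
  have "\<forall>\<^sub>F n in sequentially. continuous_on {0..T} (picard n)"
    using continuous_on_subset[OF continuous_on_picard Icc_subset[OF T]] by simp
  then show "continuous_on {0..T} fixed_point"
    using uniform_limit_theorem[OF _ uniform_limit_picard[OF T]] by simp
qed

lemma fixed_point_eq: "t \<in> I \<Longrightarrow> \<Lambda> fixed_point t = fixed_point t"
proof -
  assume t: "t \<in> I"
  obtain L where L: "\<And>w1 w2 s. continuous_on I w1 \<Longrightarrow> continuous_on I w2 \<Longrightarrow>
      s \<in> {0..t} \<Longrightarrow> norm (\<Lambda> w1 s - \<Lambda> w2 s) \<le> L * integral {0..s} (\<lambda>r. norm (w1 r - w2 r))"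
    using history_dependent_Icc[OF history_dependent t] by metis
  have tt: "t \<in> {0..t}" using nonneg[OF t] by simp
  have lim: "uniform_limit {0..t} picard fixed_point sequentially" by (rule uniform_limit_picard[OF t])
  have cont: "continuous_on {0..t} (picard n)" "continuous_on {0..t} fixed_point" for n
    using continuous_on_subset[OF continuous_on_picard Icc_subset[OF t]]
      continuous_on_subset[OF continuous_on_fixed_point Icc_subset[OF t]] by blast+
  have "uniform_limit {0..t} (\<lambda>n s. norm (picard n s - fixed_point s)) (\<lambda>_. 0) sequentially"
    using lim by (simp add: uniform_limit_iff dist_norm)
  then obtain J J0 where J: "\<And>n. ((\<lambda>s. norm (picard n s - fixed_point s)) has_integral J n) {0..t}"
    and J0: "((\<lambda>_. 0) has_integral J0) {0..t}" "J \<longlonglongrightarrow> J0"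
    by (rule uniform_limit_integral) (auto intro!: continuous_intros cont)
  have "J0 = 0" using J0(1) has_integral_0 has_integral_unique by blast
  then have integral_tendsto: "(\<lambda>n. integral {0..t} (\<lambda>s. norm (picard n s - fixed_point s))) \<longlonglongrightarrow> 0"
    using J0(2) integral_unique[OF J] by simp
  have "(\<lambda>n. \<Lambda> (picard n) t) \<longlonglongrightarrow> \<Lambda> fixed_point t"
  proof (rule LIM_zero_cancel, rule Lim_null_comparison)
    show "\<forall>\<^sub>F n in sequentially. norm (\<Lambda> (picard n) t - \<Lambda> fixed_point t)
        \<le> L * integral {0..t} (\<lambda>s. norm (picard n s - fixed_point s))"
      using L[OF continuous_on_picard continuous_on_fixed_point tt] by simp
    show "(\<lambda>n. L * integral {0..t} (\<lambda>s. norm (picard n s - fixed_point s))) \<longlonglongrightarrow> 0"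
      using tendsto_mult_right_zero[OF integral_tendsto] by simp
  qed
  moreover have "(\<lambda>n. \<Lambda> (picard n) t) \<longlonglongrightarrow> fixed_point t"
    using LIMSEQ_Suc[OF tendsto_uniform_limitI[OF lim tt]] by (simp add: picard_Suc)
  ultimately show ?thesis by (rule LIMSEQ_unique)
qed

lemma fixed_point_unique:
  assumes "continuous_on I w1" "\<And>t. t \<in> I \<Longrightarrow> \<Lambda> w1 t = w1 t"
    and "continuous_on I w2" "\<And>t. t \<in> I \<Longrightarrow> \<Lambda> w2 t = w2 t"
    and t: "t \<in> I"
  shows "w1 t = w2 t"
proof -
  obtain L where "L > 0" and L: "\<And>s. s \<in> {0..t} \<Longrightarrow>
      norm (\<Lambda> w1 s - \<Lambda> w2 s) \<le> L * integral {0..s} (\<lambda>r. norm (w1 r - w2 r))"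
    using history_dependent_Icc[OF history_dependent t] assms(1,3) by metis
  have sub: "{0..t} \<subseteq> I" by (rule Icc_subset[OF t])
  have "norm (w1 t - w2 t) = 0"
  proof (rule integral_inequality_imp_eq_0[where \<phi> = "\<lambda>s. norm (w1 s - w2 s)" and T = t])
    show "continuous_on {0..t} (\<lambda>s. norm (w1 s - w2 s))"
      by (intro continuous_intros continuous_on_subset[OF _ sub] assms(1,3))
    show "norm (w1 s - w2 s) \<le> L * integral {0..s} (\<lambda>r. norm (w1 r - w2 r))" if "s \<in> {0..t}" for s
      using L[OF that] assms(2,4) that sub by auto
  qed (use \<open>L > 0\<close> nonneg[OF t] in auto)
  then show ?thesis by simp
qed

end

section \<open>The stationary problem\<close>

locale cone_functional =
  fixes K :: "'a::{real_inner,complete_space} set" and j :: "'a \<Rightarrow> 'a \<Rightarrow> real"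
  assumes convex_cone: "convex_cone K" and closed: "closed K"
    and convex: "\<And>\<eta>. convex_on K (j \<eta>)"
    and homogeneous: "\<And>\<eta> c v. c > 0 \<Longrightarrow> v \<in> K \<Longrightarrow> j \<eta> (c *\<^sub>R v) = c * j \<eta> v"
    and lipschitz: "\<And>\<eta>. \<exists>L. L-lipschitz_on K (j \<eta>)"
begin

lemma zero_in_K: "0 \<in> K"
  and add_in_K: "x \<in> K \<Longrightarrow> y \<in> K \<Longrightarrow> x + y \<in> K"
  and scaleR_in_K: "x \<in> K \<Longrightarrow> 0 \<le> c \<Longrightarrow> c *\<^sub>R x \<in> K"
  using convex_cone unfolding convex_cone_iff by auto

lemma convex_K: "convex K" and K_nonempty: "K \<noteq> {}"
  using convex_cone unfolding convex_cone_def by auto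

lemma Cset_iff: "\<xi> \<in> Cset j K \<eta> \<longleftrightarrow> (\<forall>v\<in>K. inner \<xi> v \<le> j \<eta> v)"
  unfolding Cset_def Jext_def by (auto split: if_splits)

lemma j_zero: "j \<eta> 0 = 0"
  using homogeneous[of 2 0 \<eta>] zero_in_K by simp

lemma j_subadditive:
  assumes "v \<in> K" "w \<in> K"
  shows "j \<eta> (v + w) \<le> j \<eta> v + j \<eta> w"
proof -
  have "(1/2) *\<^sub>R v + (1/2) *\<^sub>R w \<in> K" using assms by (intro add_in_K scaleR_in_K) auto
  then have "j \<eta> (v + w) = 2 * j \<eta> ((1 - 1/2) *\<^sub>R v + (1/2) *\<^sub>R w)"
    using homogeneous[of 2 "(1/2) *\<^sub>R v + (1/2) *\<^sub>R w" \<eta>] by (simp add: scaleR_add_right)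
  also have "\<dots> \<le> j \<eta> v + j \<eta> w"
    using convex_onD[OF convex, of "1/2" v w \<eta>] assms by simp
  finally show ?thesis .
qed

lemma Cset_if_variational_ineq:
  assumes w: "w \<in> K" and vi: "\<And>v. v \<in> K \<Longrightarrow> inner \<xi> (v - w) \<le> j \<eta> v - j \<eta> w"
  shows "\<xi> \<in> Cset j K \<eta>" "inner \<xi> w = j \<eta> w"
proof -
  have "j \<eta> w \<le> inner \<xi> w" using vi[OF zero_in_K] by (simp add: j_zero inner_diff_right)
  moreover have "inner \<xi> w \<le> j \<eta> w"
    using vi[OF scaleR_in_K[OF w, of 2]] homogeneous[OF _ w, of 2 \<eta>] by (simp add: scaleR_2)
  ultimately show "inner \<xi> w = j \<eta> w" by simp
  show "\<xi> \<in> Cset j K \<eta>" unfolding Cset_iff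
  proof
    fix v assume v: "v \<in> K"
    show "inner \<xi> v \<le> j \<eta> v"
      using vi[OF add_in_K[OF v w]] j_subadditive[OF v w, of \<eta>] \<open>inner \<xi> w = j \<eta> w\<close>
      by (simp add: inner_diff_right inner_add_right)
  qed
qed

text \<open>The almost-maximizer is
  \<open>(x - x\<^sub>h) /\<^sub>R h\<close>, where \<open>x\<^sub>h\<close> is the proximal point of \<open>h j \<eta>\<close> at \<open>x\<close>;
  Lipschitz continuity gives \<open>\<parallel>x - x\<^sub>h\<parallel> \<le> h L\<close>.\<close>
lemma Cset_support_function:
  assumes x: "x \<in> K" and "e > 0"
  shows "\<exists>\<xi>\<in>Cset j K \<eta>. j \<eta> x - e \<le> inner \<xi> x"
proof -
  obtain L where L: "L-lipschitz_on K (j \<eta>)" using lipschitz by blast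
  have "L \<ge> 0" using L by (simp add: lipschitz_on_def)
  define h where "h = e / (L\<^sup>2 + 1)"
  have "h > 0" using \<open>e > 0\<close> by (simp add: h_def add_nonneg_pos)
  obtain x\<^sub>h where x\<^sub>h: "x\<^sub>h \<in> K" and vi: "\<And>v. v \<in> K \<Longrightarrow> 0 \<le> inner (x\<^sub>h - x) (v - x\<^sub>h) + h * j \<eta> v - h * j \<eta> x\<^sub>h"
    using exists_proximal_point[OF convex_K closed K_nonempty convex_on_cmul[OF _ convex]
        lipschitz_on_cmult_real_nonneg[OF L], of h x] \<open>h > 0\<close> by auto
  define \<xi> where "\<xi> = (1 / h) *\<^sub>R (x - x\<^sub>h)"
  have "inner \<xi> (v - x\<^sub>h) \<le> j \<eta> v - j \<eta> x\<^sub>h" if "v \<in> K" for v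
  proof -
    have "inner (x - x\<^sub>h) (v - x\<^sub>h) \<le> h * (j \<eta> v - j \<eta> x\<^sub>h)"
      using vi[OF that] by (simp add: inner_diff_left inner_diff_right algebra_simps)
    then show ?thesis
      unfolding \<xi>_def inner_scaleR_left using \<open>h > 0\<close> by (simp add: field_simps)
  qed
  note \<xi> = Cset_if_variational_ineq[OF x\<^sub>h this]
  have "(norm (x - x\<^sub>h))\<^sup>2 \<le> h * (j \<eta> x - j \<eta> x\<^sub>h)"
    using vi[OF x] by (simp add: power2_norm_eq_inner inner_diff_left inner_diff_right inner_commute algebra_simps)
  also have "\<dots> \<le> h * (L * norm (x - x\<^sub>h))"
    using lipschitz_onD[OF L x x\<^sub>h] \<open>h > 0\<close> by (intro mult_left_mono) (auto simp: dist_norm dist_real_def)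
  finally have "norm (x - x\<^sub>h) \<le> h * L" by (cases "x = x\<^sub>h") (use \<open>L \<ge> 0\<close> \<open>h > 0\<close> in \<open>auto simp: power2_eq_square\<close>)
  have "j \<eta> x - e \<le> j \<eta> x - L * (h * L)"
  proof -
    have "L * (h * L) = e * (L\<^sup>2 / (L\<^sup>2 + 1))" by (simp add: h_def power2_eq_square)
    also have "\<dots> \<le> e" using \<open>e > 0\<close> by (intro mult_left_le) (auto simp: add_nonneg_pos)
    finally show ?thesis by simp
  qed
  also have "\<dots> \<le> j \<eta> x\<^sub>h"
    using lipschitz_onD[OF L x x\<^sub>h] mult_left_mono[OF \<open>norm (x - x\<^sub>h) \<le> h * L\<close> \<open>L \<ge> 0\<close>]
    by (simp add: dist_norm dist_real_def abs_le_iff)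
  also have "\<dots> \<le> j \<eta> x\<^sub>h + inner \<xi> (x - x\<^sub>h)"
    unfolding \<xi>_def inner_scaleR_left using \<open>h > 0\<close> by simp
  also have "\<dots> = inner \<xi> x"
    using \<xi>(2) by (simp add: inner_diff_right)
  finally show ?thesis using \<xi>(1) by blast
qed

lemma maximizer_Cset_iff:
  assumes \<xi>\<^sub>0: "\<xi>\<^sub>0 \<in> Cset j K \<eta>"
  shows "(\<forall>\<xi>\<in>Cset j K \<eta>. inner \<xi> w \<le> inner \<xi>\<^sub>0 w) \<longleftrightarrow> w \<in> K \<and> inner \<xi>\<^sub>0 w = j \<eta> w"
proof
  assume max: "\<forall>\<xi>\<in>Cset j K \<eta>. inner \<xi> w \<le> inner \<xi>\<^sub>0 w"
  show "w \<in> K \<and> inner \<xi>\<^sub>0 w = j \<eta> w"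
  proof
    show w: "w \<in> K"
    proof (rule ccontr)
      assume "w \<notin> K"
      then obtain p where p: "\<forall>v\<in>K. inner p v \<le> 0" "inner p w > 0"
        using separation_closed_convex_cone[OF convex_cone closed] by blast
      then have "\<xi>\<^sub>0 + p \<in> Cset j K \<eta>"
        using \<xi>\<^sub>0 unfolding Cset_iff by (smt (verit) inner_add_left)
      then show False using max p(2) by (fastforce simp: inner_add_left)
    qed
    have "inner \<xi>\<^sub>0 w \<le> j \<eta> w" using \<xi>\<^sub>0 w unfolding Cset_iff by blast
    moreover have "j \<eta> w \<le> inner \<xi>\<^sub>0 w + e" if "e > 0" for e
      using Cset_support_function[OF w that, of \<eta>] max by fastforce
    ultimately show "inner \<xi>\<^sub>0 w = j \<eta> w" using field_le_epsilon by (metis order_antisym)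
  qed
next
  assume "w \<in> K \<and> inner \<xi>\<^sub>0 w = j \<eta> w"
  then show "\<forall>\<xi>\<in>Cset j K \<eta>. inner \<xi> w \<le> inner \<xi>\<^sub>0 w" by (simp add: Cset_iff)
qed

lemma neg_in_normal_cone_Cset_t_iff:
  "- w \<in> normal_cone (Cset_t j K f \<eta> t) y \<longleftrightarrow>
    w \<in> K \<and> f t - y \<in> Cset j K \<eta> \<and> inner (f t - y) w = j \<eta> w"
proof -
  have "y \<in> Cset_t j K f \<eta> t \<longleftrightarrow> f t - y \<in> Cset j K \<eta>"
    unfolding Cset_t_def by (auto intro: image_eqI[of _ _ "f t - y"])
  moreover have "(\<forall>z\<in>Cset_t j K f \<eta> t. inner (- w) (z - y) \<le> 0) \<longleftrightarrow>
      (\<forall>\<xi>\<in>Cset j K \<eta>. inner \<xi> w \<le> inner (f t - y) w)"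
    unfolding Cset_t_def by (auto simp: inner_diff_left inner_diff_right inner_commute)
  ultimately show ?thesis
    unfolding normal_cone_def using maximizer_Cset_iff[of "f t - y" \<eta> w] by auto
qed

end

text \<open>Dual form of the variational inequality
  \<open>\<forall>v\<in>K. inner (A w - g) (v - w) + j \<eta> v - j \<eta> w \<ge> 0\<close>.\<close>
definition stationary_solution ::
  "('a::real_inner \<Rightarrow> 'a) \<Rightarrow> ('a \<Rightarrow> 'a \<Rightarrow> real) \<Rightarrow> 'a set \<Rightarrow> 'a \<Rightarrow> 'a \<Rightarrow> 'a \<Rightarrow> bool" where
  "stationary_solution A j K \<eta> g w \<longleftrightarrow> w \<in> K \<and> g - A w \<in> Cset j K \<eta> \<and> inner (g - A w) w = j \<eta> w"

locale stationary_problem = cone_functional K j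
  for K :: "'a::{real_inner,complete_space} set" and j +
  fixes A :: "'a \<Rightarrow> 'a" and mA LA \<alpha> :: real
  assumes mA_pos: "mA > 0" and LA_pos: "LA > 0"
    and strongly_monotone: "\<And>u v. mA * (norm (u - v))\<^sup>2 \<le> inner (A u - A v) (u - v)"
    and A_lipschitz: "\<And>u v. norm (A u - A v) \<le> LA * norm (u - v)"
    and \<alpha>_nonneg: "\<alpha> \<ge> 0"
    and j_mixed: "\<And>\<eta>1 \<eta>2 v1 v2. v1 \<in> K \<Longrightarrow> v2 \<in> K \<Longrightarrow>
      j \<eta>1 v2 - j \<eta>1 v1 + j \<eta>2 v1 - j \<eta>2 v2 \<le> \<alpha> * norm (\<eta>1 - \<eta>2) * norm (v1 - v2)"
begin

text \<open>The solution is the fixed point of \<open>w \<mapsto> prox (w - \<rho> (A w - g))\<close>, where \<open>prox\<close> is the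
  proximal map of \<open>\<rho> j \<eta>\<close> on \<open>K\<close> and \<open>\<rho> = mA / LA\<^sup>2\<close> makes the gradient step a contraction.\<close>
lemma stationary_solution_exists: "\<exists>w. stationary_solution A j K \<eta> g w"
proof -
  define \<rho> where "\<rho> = mA / LA\<^sup>2"
  have "\<rho> > 0" using mA_pos LA_pos by (simp add: \<rho>_def)
  obtain L where L: "L-lipschitz_on K (j \<eta>)" using lipschitz by blast
  have "\<exists>x\<in>K. \<forall>v\<in>K. 0 \<le> inner (x - z) (v - x) + \<rho> * j \<eta> v - \<rho> * j \<eta> x" for z
    using exists_proximal_point[OF convex_K closed K_nonempty convex_on_cmul[OF _ convex]
        lipschitz_on_cmult_real_nonneg[OF L]] \<open>\<rho> > 0\<close> by simp
  then obtain prox where prox: "\<And>z. prox z \<in> K"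
    "\<And>z v. v \<in> K \<Longrightarrow> 0 \<le> inner (prox z - z) (v - prox z) + \<rho> * j \<eta> v - \<rho> * j \<eta> (prox z)"
    by metis
  define c where "c = sqrt (max 0 (1 - mA\<^sup>2 / LA\<^sup>2))"
  have "c < 1" using mA_pos LA_pos by (simp add: c_def max_def)
  have "dist (prox (w1 - \<rho> *\<^sub>R (A w1 - g))) (prox (w2 - \<rho> *\<^sub>R (A w2 - g))) \<le> c * dist w1 w2" for w1 w2
  proof -
    have "dist (prox (w1 - \<rho> *\<^sub>R (A w1 - g))) (prox (w2 - \<rho> *\<^sub>R (A w2 - g)))
        \<le> norm ((w1 - \<rho> *\<^sub>R (A w1 - g)) - (w2 - \<rho> *\<^sub>R (A w2 - g)))"
      unfolding dist_norm by (intro proximal_point_nonexpansive[where \<phi> = "\<lambda>v. \<rho> * j \<eta> v"] prox)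
    also have "\<dots> = norm ((w1 - \<rho> *\<^sub>R A w1) - (w2 - \<rho> *\<^sub>R A w2))"
      by (simp add: algebra_simps)
    also have "\<dots> \<le> c * dist w1 w2"
      unfolding c_def \<rho>_def dist_norm
      by (intro strongly_monotone_gradient_step_contraction mA_pos LA_pos strongly_monotone A_lipschitz)
    finally show ?thesis .
  qed
  then obtain w where w: "prox (w - \<rho> *\<^sub>R (A w - g)) = w"
    using banach_fix_type[of c "\<lambda>w. prox (w - \<rho> *\<^sub>R (A w - g))"] \<open>c < 1\<close> by (auto simp: c_def)
  have "inner (g - A w) (v - w) \<le> j \<eta> v - j \<eta> w" if "v \<in> K" for v
  proof -
    have "0 \<le> inner (w - (w - \<rho> *\<^sub>R (A w - g))) (v - w) + \<rho> * j \<eta> v - \<rho> * j \<eta> w"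
      using prox(2)[OF that, of "w - \<rho> *\<^sub>R (A w - g)"] unfolding w .
    then have "0 \<le> \<rho> * (inner (A w - g) (v - w) + j \<eta> v - j \<eta> w)"
      by (simp add: algebra_simps)
    then show ?thesis
      using \<open>\<rho> > 0\<close> by (simp add: zero_le_mult_iff inner_diff_left inner_diff_right)
  qed
  then show ?thesis
    using Cset_if_variational_ineq[of w] prox(1)[of "w - \<rho> *\<^sub>R (A w - g)"]
    unfolding stationary_solution_def w by blast
qed

lemma stationary_solution_lipschitz:
  assumes w1: "stationary_solution A j K \<eta>1 g1 w1" and w2: "stationary_solution A j K \<eta>2 g2 w2"
  shows "mA * norm (w1 - w2) \<le> norm (g1 - g2) + \<alpha> * norm (\<eta>1 - \<eta>2)"
proof (cases "w1 = w2")
  case True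
  then show ?thesis using \<alpha>_nonneg by simp
next
  case False
  have K: "w1 \<in> K" "w2 \<in> K" using w1 w2 by (simp_all add: stationary_solution_def)
  have "inner (g1 - A w1) w2 \<le> j \<eta>1 w2" "inner (g2 - A w2) w1 \<le> j \<eta>2 w1"
    using w1 w2 K unfolding stationary_solution_def Cset_iff by blast+
  then have "inner (A w1 - A w2) (w1 - w2) - inner (g1 - g2) (w1 - w2)
      \<le> j \<eta>1 w2 - j \<eta>1 w1 + j \<eta>2 w1 - j \<eta>2 w2"
    using w1 w2 unfolding stationary_solution_def
    by (simp add: inner_diff_left inner_diff_right inner_commute)
  also have "\<dots> \<le> \<alpha> * norm (\<eta>1 - \<eta>2) * norm (w1 - w2)" by (rule j_mixed[OF K])
  finally have "mA * norm (w1 - w2) * norm (w1 - w2)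
      \<le> (norm (g1 - g2) + \<alpha> * norm (\<eta>1 - \<eta>2)) * norm (w1 - w2)"
    using strongly_monotone[of w1 w2] Cauchy_Schwarz_ineq2[of "g1 - g2" "w1 - w2"]
    by (simp add: power2_eq_square algebra_simps)
  then show ?thesis using False by simp
qed

lemma stationary_solution_unique:
  "stationary_solution A j K \<eta> g w1 \<Longrightarrow> stationary_solution A j K \<eta> g w2 \<Longrightarrow> w1 = w2"
  using stationary_solution_lipschitz[of \<eta> g w1 \<eta> g w2] mA_pos by (simp add: mult_le_0_iff)

end

section \<open>The evolution problem\<close>

locale evolution_problem = stationary_problem K j A mA LA \<alpha> + time_interval I
  for K :: "'a::{real_inner,complete_space} set" and j A mA LA \<alpha> I +
  fixes B :: "'a \<Rightarrow> 'a" and S :: "(real \<Rightarrow> 'a) \<Rightarrow> real \<Rightarrow> 'a" and f :: "real \<Rightarrow> 'a"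
    and u0 :: 'a and LB :: real
  assumes B_lipschitz: "LB-lipschitz_on UNIV B"
    and f_continuous: "continuous_on I f"
    and S_continuous: "\<And>w. continuous_on I w \<Longrightarrow> continuous_on I (S w)"
    and S_history_dependent: "history_dependent I S"
begin

lemma neg_in_normal_cone_iff_stationary_solution:
  "- w \<in> normal_cone (Cset_t j K f \<eta> t) (A w + b) \<longleftrightarrow> stationary_solution A j K \<eta> (f t - b) w"
proof -
  have "f t - (A w + b) = f t - b - A w" by simp
  then show ?thesis unfolding neg_in_normal_cone_Cset_t_iff stationary_solution_def by (simp only:)
qed

definition W :: "'a \<Rightarrow> 'a \<Rightarrow> 'a" where
  "W \<eta> g = (SOME w. stationary_solution A j K \<eta> g w)"

lemma stationary_solution_W: "stationary_solution A j K \<eta> g (W \<eta> g)"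
  unfolding W_def using stationary_solution_exists by (rule someI_ex)

lemma W_eqI: "stationary_solution A j K \<eta> g w \<Longrightarrow> W \<eta> g = w"
  using stationary_solution_unique stationary_solution_W by blast

lemma lipschitz_on_W: "((1 + \<alpha>) / mA)-lipschitz_on UNIV (\<lambda>p. W (fst p) (snd p))"
proof (rule lipschitz_onI)
  fix p q :: "'a \<times> 'a"
  have "mA * dist (W (fst p) (snd p)) (W (fst q) (snd q))
      \<le> dist (snd p) (snd q) + \<alpha> * dist (fst p) (fst q)"
    unfolding dist_norm by (rule stationary_solution_lipschitz[OF stationary_solution_W stationary_solution_W])
  also have "\<dots> \<le> (1 + \<alpha>) * dist p q"
    using dist_snd_le[of p q] mult_left_mono[OF dist_fst_le[of p q] \<alpha>_nonneg]
    by (simp add: distrib_right add_mono)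
  finally show "dist (W (fst p) (snd p)) (W (fst q) (snd q)) \<le> (1 + \<alpha>) / mA * dist p q"
    using mA_pos by (simp add: field_simps mult.commute)
qed (use \<alpha>_nonneg mA_pos in simp)

definition velocity_operator :: "(real \<Rightarrow> 'a) \<Rightarrow> real \<Rightarrow> 'a" where
  "velocity_operator w t = W (u0 + primitive w t) (f t - B (u0 + primitive w t) - S w t)"

lemma continuous_on_velocity_operator:
  assumes w: "continuous_on I w"
  shows "continuous_on I (velocity_operator w)"
proof -
  have \<eta>: "continuous_on I (\<lambda>t. u0 + primitive w t)"
    by (intro continuous_intros continuous_on_primitive w)
  have "continuous_on I (\<lambda>t. B (u0 + primitive w t))"
    by (rule continuous_on_compose2[OF lipschitz_on_continuous_on[OF B_lipschitz] \<eta>]) simp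
  then have "continuous_on I (\<lambda>t. (u0 + primitive w t, f t - B (u0 + primitive w t) - S w t))"
    by (intro continuous_intros \<eta> f_continuous S_continuous w)
  from continuous_on_compose2[OF lipschitz_on_continuous_on[OF lipschitz_on_W] this]
  show ?thesis by (simp add: velocity_operator_def[abs_def])
qed

lemma norm_velocity_operator_diff_le:
  assumes w1: "continuous_on I w1" and w2: "continuous_on I w2" and t: "t \<in> I"
  shows "mA * norm (velocity_operator w1 t - velocity_operator w2 t)
    \<le> (LB + \<alpha>) * integral {0..t} (\<lambda>s. norm (w1 s - w2 s)) + norm (S w1 t - S w2 t)"
proof -
  define \<eta>1 \<eta>2 where "\<eta>1 = u0 + primitive w1 t" and "\<eta>2 = u0 + primitive w2 t"
  define Q where "Q = integral {0..t} (\<lambda>s. norm (w1 s - w2 s))"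
  have "norm (\<eta>1 - \<eta>2) \<le> Q"
    unfolding \<eta>1_def \<eta>2_def Q_def using Icc_subset[OF t]
    by (simp add: norm_primitive_diff_primitive_le continuous_on_subset[OF w1] continuous_on_subset[OF w2])
  then have "norm (B \<eta>1 - B \<eta>2) \<le> LB * Q"
    using lipschitz_onD[OF B_lipschitz, of \<eta>1 \<eta>2] lipschitz_on_nonneg[OF B_lipschitz]
    by (simp add: dist_norm) (meson mult_left_mono order_trans)
  have "mA * norm (velocity_operator w1 t - velocity_operator w2 t)
      \<le> norm ((f t - B \<eta>1 - S w1 t) - (f t - B \<eta>2 - S w2 t)) + \<alpha> * norm (\<eta>1 - \<eta>2)"
    unfolding velocity_operator_def \<eta>1_def[symmetric] \<eta>2_def[symmetric]
    by (rule stationary_solution_lipschitz[OF stationary_solution_W stationary_solution_W])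
  also have "\<dots> \<le> (norm (B \<eta>1 - B \<eta>2) + norm (S w1 t - S w2 t)) + \<alpha> * Q"
  proof (rule add_mono)
    have "(f t - B \<eta>1 - S w1 t) - (f t - B \<eta>2 - S w2 t) = (B \<eta>2 - B \<eta>1) + (S w2 t - S w1 t)"
      by (simp add: algebra_simps)
    then show "norm ((f t - B \<eta>1 - S w1 t) - (f t - B \<eta>2 - S w2 t))
        \<le> norm (B \<eta>1 - B \<eta>2) + norm (S w1 t - S w2 t)"
      by (metis norm_minus_commute norm_triangle_ineq)
    show "\<alpha> * norm (\<eta>1 - \<eta>2) \<le> \<alpha> * Q"
      using mult_left_mono[OF \<open>norm (\<eta>1 - \<eta>2) \<le> Q\<close> \<alpha>_nonneg] .
  qed
  finally show ?thesis
    using \<open>norm (B \<eta>1 - B \<eta>2) \<le> LB * Q\<close> by (simp add: Q_def algebra_simps)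
qed

lemma history_dependent_velocity_operator: "history_dependent I velocity_operator"
  unfolding history_dependent_def
proof (intro allI impI)
  fix J assume J: "compact J \<and> J \<subseteq> I"
  then obtain L where "L > 0" and L: "\<And>w1 w2 t. continuous_on I w1 \<Longrightarrow> continuous_on I w2 \<Longrightarrow> t \<in> J \<Longrightarrow>
      norm (S w1 t - S w2 t) \<le> L * integral {0..t} (\<lambda>s. norm (w1 s - w2 s))"
    using S_history_dependent unfolding history_dependent_def by meson
  have "0 < (LB + \<alpha> + L) / mA"
    using lipschitz_on_nonneg[OF B_lipschitz] \<alpha>_nonneg \<open>L > 0\<close> mA_pos by simp
  moreover have "norm (velocity_operator w1 t - velocity_operator w2 t)
      \<le> (LB + \<alpha> + L) / mA * integral {0..t} (\<lambda>s. norm (w1 s - w2 s))"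
    if "continuous_on I w1" "continuous_on I w2" "t \<in> J" for w1 w2 t
    using norm_velocity_operator_diff_le[of w1 w2 t] L[of w1 w2 t] that J mA_pos
    by (auto simp: field_simps)
  ultimately show "\<exists>L>0. \<forall>w1 w2. continuous_on I w1 \<and> continuous_on I w2 \<longrightarrow>
      (\<forall>t\<in>J. norm (velocity_operator w1 t - velocity_operator w2 t)
        \<le> L * integral {0..t} (\<lambda>s. norm (w1 s - w2 s)))"
    by blast
qed

sublocale velocity: history_dependent_operator I velocity_operator
  by unfold_locales (fact continuous_on_velocity_operator, fact history_dependent_velocity_operator)

lemma solution_if_fixed_point:
  assumes w: "continuous_on I w" and fixed: "\<And>t. t \<in> I \<Longrightarrow> velocity_operator w t = w t"
  shows "is_solution I A B S f j K u0 (\<lambda>t. u0 + primitive w t) w" and "\<forall>t\<in>I. w t \<in> K"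
proof -
  have sol: "stationary_solution A j K (u0 + primitive w t) (f t - (B (u0 + primitive w t) + S w t)) (w t)"
    if "t \<in> I" for t
    using stationary_solution_W fixed[OF that] unfolding velocity_operator_def by (metis diff_diff_eq)
  then show "\<forall>t\<in>I. w t \<in> K" by (simp add: stationary_solution_def)
  have "((\<lambda>t. u0 + primitive w t) has_vector_derivative w t) (at t within I)" if t: "t \<in> I" for t
  proof -
    obtain T where T: "T \<in> I" "t \<in> {0..T}" "at t within I = at t within {0..T}"
      using at_within_eq_Icc[OF t] by blast
    have "continuous_on {0..T} w" using continuous_on_subset[OF w Icc_subset[OF T(1)]] .
    from primitive_has_vector_derivative[OF this T(2)] show ?thesis
      unfolding T(3) by (intro derivative_eq_intros) auto
  qed
  then show "is_solution I A B S f j K u0 (\<lambda>t. u0 + primitive w t) w"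
    unfolding is_solution_def add.assoc neg_in_normal_cone_iff_stationary_solution using w sol by simp
qed

lemma fixed_point_if_solution:
  assumes sol: "is_solution I A B S f j K u0 u u'" and t: "t \<in> I"
  shows "u t = u0 + primitive u' t" and "velocity_operator u' t = u' t"
proof -
  have sub: "{0..t} \<subseteq> I" by (rule Icc_subset[OF t])
  show u: "u t = u0 + primitive u' t"
  proof -
    have "(u has_vector_derivative u' s) (at s within {0..t})" if "s \<in> {0..t}" for s
      using sol sub that unfolding is_solution_def by (meson has_vector_derivative_within_subset subsetD)
    moreover have "continuous_on {0..t} u'"
      using sol sub unfolding is_solution_def by (meson continuous_on_subset)
    ultimately have "u t = u 0 + primitive u' t"
      using nonneg[OF t] by (intro eq_primitive_if_has_vector_derivative)
    then show ?thesis using sol by (simp add: is_solution_def)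
  qed
  have "stationary_solution A j K (u t) (f t - (B (u t) + S u' t)) (u' t)"
    using sol t unfolding is_solution_def neg_in_normal_cone_iff_stationary_solution[symmetric]
    by (simp add: add.assoc)
  then show "velocity_operator u' t = u' t"
    unfolding velocity_operator_def u[symmetric] by (simp add: W_eqI diff_diff_eq)
qed

lemma exists_solution: "\<exists>u u'. is_solution I A B S f j K u0 u u' \<and> (\<forall>t\<in>I. u' t \<in> K)"
  using solution_if_fixed_point[OF velocity.continuous_on_fixed_point velocity.fixed_point_eq] by blast

lemma solution_unique:
  assumes su: "is_solution I A B S f j K u0 u u'" and sv: "is_solution I A B S f j K u0 v v'"
    and t: "t \<in> I"
  shows "u t = v t"
proof -
  have "u' s = v' s" if "s \<in> {0..t}" for s
    using Icc_subset[OF t] that su sv fixed_point_if_solution(2)[OF su] fixed_point_if_solution(2)[OF sv]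
    by (intro velocity.fixed_point_unique[of u' v']) (auto simp: is_solution_def)
  then show ?thesis
    using fixed_point_if_solution(1)[OF su t] fixed_point_if_solution(1)[OF sv t] primitive_cong by metis
qed

end

theorem corollary4p2:
  fixes I :: "real set"
    and K :: "'a::{real_inner, complete_space} set"
    and A B :: "'a \<Rightarrow> 'a"
    and f :: "real \<Rightarrow> 'a"
    and S :: "(real \<Rightarrow> 'a) \<Rightarrow> (real \<Rightarrow> 'a)"
    and j :: "'a \<Rightarrow> 'a \<Rightarrow> real"
    and u0 :: 'a
    and mA LA \<alpha>j :: real
  assumes I: "(\<exists>T>0. I = {0..T}) \<or> I = {0..}"
    and K: "convex_cone K" "closed K"
    and mA: "mA > 0" and LA: "LA > 0"
    and A_mono: "\<forall>u v. inner (A u - A v) (u - v) \<ge> mA * (norm (u - v))\<^sup>2"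
    and A_lip: "\<forall>u v. norm (A u - A v) \<le> LA * norm (u - v)"
    and f: "continuous_on I f"
    and B: "\<exists>LB. LB-lipschitz_on UNIV B"
    and S_cont: "\<forall>w. continuous_on I w \<longrightarrow> continuous_on I (S w)"
    and S_hist: "history_dependent I S"
    and j_convex: "\<forall>\<eta>. convex_on K (j \<eta>)"
    and j_homog: "\<forall>\<eta>. \<forall>c>0. \<forall>v\<in>K. j \<eta> (c *\<^sub>R v) = c * j \<eta> v"
    and j_lip: "\<forall>\<eta>. \<exists>L. L-lipschitz_on K (j \<eta>)"
    and \<alpha>j: "\<alpha>j \<ge> 0"
    and j_mix: "\<forall>\<eta>1 \<eta>2. \<forall>v1\<in>K. \<forall>v2\<in>K.
       j \<eta>1 v2 - j \<eta>1 v1 + j \<eta>2 v1 - j \<eta>2 v2 \<le> \<alpha>j * norm (\<eta>1 - \<eta>2) * norm (v1 - v2)"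
  shows "(\<exists>u u'. is_solution I A B S f j K u0 u u' \<and> (\<forall>t\<in>I. u' t \<in> K)) \<and>
         (\<forall>u u' v v'. is_solution I A B S f j K u0 u u' \<and> is_solution I A B S f j K u0 v v'
             \<longrightarrow> (\<forall>t\<in>I. u t = v t))"
proof -
  obtain LB where "LB-lipschitz_on UNIV B" using B by blast
  then interpret evolution_problem K j A mA LA \<alpha>j I B S f u0 LB
    by unfold_locales
      (use I K mA LA A_mono A_lip f S_cont S_hist j_convex j_homog j_lip \<alpha>j j_mix in auto)
  show ?thesis using exists_solution solution_unique by blast
qed

end
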